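(* Let $\{\varphi_n\},\{\psi_n\}$ be biorthogonal sequences in a Hilbert space $\mathcal H$ forming a $(\mathcal D,\mathcal E)$-quasi basis for dense subspaces $\mathcal D,\mathcal E$ with $D_\psi\subseteq\mathcal D\subseteq D(\varphi)$, $D_\varphi\subseteq\mathcal E\subseteq D(\psi)$. Suppose there is a real sequence $\{r_n\}$ with $r_n\ge1$ for all $n$ such that $D(\varphi_r):=\{x\in\mathcal H:\sum_k r_k^2|\langle x,\varphi_k\rangle|^2<\infty\}$ satisfies $D(\varphi_r)\subseteq\mathcal D$ and $D(\varphi_r)$ is dense in $\mathcal H$. Then $D_\varphi$ is dense in $\mathcal H$ and $(\{\varphi_n\},\{\psi_n\})$ is a $(D(\varphi),D_\varphi)$-quasi basis.
   Context: Inner product linear in the first argument. Biorthogonal: $\langle\varphi_n,\psi_m\rangle=\delta_{nm}$. $D_\varphi,D_\psi$ are the linear spans; $D(\varphi)=\{x:\sum_n|\langle x,\varphi_n\rangle|^2<\infty\}$, similarly $D(\psi)$. The pair is a $(\mathcal D,\mathcal E)$-quasi basis if $\sum_k\langle x,\varphi_k\rangle\langle\psi_k,y\rangle=\langle x,y\rangle$ for all $x\in\mathcal D$, $y\in\mathcal E$. *)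

theory Defs
  imports "HOL-Analysis.Analysis"
begin

text \<open>A complex inner product space is a (real) normed vector space equipped with a complex
  scalar multiplication compatible with the real one, and a complex inner product which is
  linear in the FIRST argument, conjugate symmetric, and induces the norm.\<close>

class complex_inner = real_normed_vector +
  fixes scaleC :: "complex \<Rightarrow> 'a \<Rightarrow> 'a"
  fixes cinner :: "'a \<Rightarrow> 'a \<Rightarrow> complex"
  assumes scaleC_add_right: "scaleC a (x + y) = scaleC a x + scaleC a y"
    and scaleC_add_left: "scaleC (a + b) x = scaleC a x + scaleC b x"
    and scaleC_scaleC: "scaleC a (scaleC b x) = scaleC (a * b) x"
    and scaleC_one: "scaleC 1 x = x"
    and scaleR_scaleC: "scaleR r x = scaleC (complex_of_real r) x"
    and cinner_add_left: "cinner (x + y) z = cinner x z + cinner y z"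
    and cinner_scaleC_left: "cinner (scaleC a x) y = a * cinner x y"
    and cinner_commute: "cinner y x = cnj (cinner x y)"
    and norm_eq_sqrt_cinner: "norm x = sqrt (Re (cinner x x))"

class chilbert = complex_inner + complete_space

definition cspan :: "'a::complex_inner set \<Rightarrow> 'a set" where
  "cspan S = {x. \<exists>F c. finite F \<and> F \<subseteq> S \<and> x = (\<Sum>v\<in>F. scaleC (c v) v)}"

definition csubspace :: "'a::complex_inner set \<Rightarrow> bool" where
  "csubspace S \<longleftrightarrow> 0 \<in> S \<and> (\<forall>x\<in>S. \<forall>y\<in>S. x + y \<in> S) \<and> (\<forall>a. \<forall>x\<in>S. scaleC a x \<in> S)"

definition dense_in_H :: "'a::complex_inner set \<Rightarrow> bool" where
  "dense_in_H S \<longleftrightarrow> closure S = UNIV"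

definition biorthogonal :: "(nat \<Rightarrow> 'a::complex_inner) \<Rightarrow> (nat \<Rightarrow> 'a) \<Rightarrow> bool" where
  "biorthogonal \<phi> \<psi> \<longleftrightarrow> (\<forall>n m. cinner (\<phi> n) (\<psi> m) = (if n = m then 1 else 0))"

definition Dom :: "(nat \<Rightarrow> 'a::complex_inner) \<Rightarrow> 'a set" where
  "Dom \<phi> = {x. summable (\<lambda>n. (cmod (cinner x (\<phi> n)))\<^sup>2)}"

definition Dom_weighted :: "(nat \<Rightarrow> real) \<Rightarrow> (nat \<Rightarrow> 'a::complex_inner) \<Rightarrow> 'a set" where
  "Dom_weighted r \<phi> = {x. summable (\<lambda>k. (r k)\<^sup>2 * (cmod (cinner x (\<phi> k)))\<^sup>2)}"

definition quasi_basis ::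
  "(nat \<Rightarrow> 'a::complex_inner) \<Rightarrow> (nat \<Rightarrow> 'a) \<Rightarrow> 'a set \<Rightarrow> 'a set \<Rightarrow> bool" where
  "quasi_basis \<phi> \<psi> D E \<longleftrightarrow>
     (\<forall>x\<in>D. \<forall>y\<in>E. (\<lambda>k. cinner x (\<phi> k) * cinner (\<psi> k) y) sums cinner x y)"

end

theory Submission
  imports Defs
begin

(*
  If w is orthogonal to every phi_k, all its coefficients vanish, so w lies in D(phi_r), hence
  in D; the quasi-basis expansion on D x E then makes w orthogonal to the dense set E, so w = 0.  By the projection theorem (closest points in closed
  convex sets, obtained from a minimising sequence that is Cauchy by the parallelogram law) a
  subspace with trivial orthogonal complement is dense; hence D_phi is dense.  The quasi-basis
  property on D(phi) x D_phi is immediate from biorthogonality: for y in D_phi only finitely many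
  <psi_k, y> are non-zero and the series is a finite sum equal to <x, y> for every x.
*)

lemma cinner_zero_left [simp]: "cinner 0 y = 0"
  using cinner_add_left [of 0 0 y] by simp

lemma cinner_zero_right [simp]: "cinner x 0 = 0"
  using cinner_commute [of x 0] by simp

lemma cinner_add_right: "cinner x (y + z) = cinner x y + cinner x z"
  by (metis cinner_add_left cinner_commute complex_cnj_add)

lemma cinner_scaleC_right: "cinner x (scaleC a y) = cnj a * cinner x y"
  by (metis cinner_commute cinner_scaleC_left complex_cnj_mult)

lemma scaleC_minus_one: "scaleC (-1) x = - x"
  using scaleR_scaleC [of "-1" x] by simp

lemma cinner_minus_left: "cinner (- x) y = - cinner x y"
  using cinner_scaleC_left [of "-1" x y] by (simp add: scaleC_minus_one)

lemma cinner_diff_left: "cinner (x - y) z = cinner x z - cinner y z"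
  using cinner_add_left [of x "- y" z] by (simp add: cinner_minus_left)

lemma cinner_diff_right: "cinner x (y - z) = cinner x y - cinner x z"
  by (metis cinner_commute cinner_diff_left complex_cnj_diff)

lemma cinner_sum_right: "cinner x (\<Sum>i\<in>I. f i) = (\<Sum>i\<in>I. cinner x (f i))"
  by (induction I rule: infinite_finite_induct) (simp_all add: cinner_add_right)

lemma scaleC_zero_right [simp]: "scaleC a 0 = 0"
  using scaleC_add_right [of a 0 0] by simp

lemma scaleC_zero_left [simp]: "scaleC 0 x = 0"
  using scaleC_add_left [of 0 0 x] by simp

lemma scaleC_sum_right: "scaleC a (\<Sum>i\<in>I. f i) = (\<Sum>i\<in>I. scaleC a (f i))"
  by (induction I rule: infinite_finite_induct) (simp_all add: scaleC_add_right)

lemma power2_norm_eq_cinner: "(norm x)\<^sup>2 = Re (cinner x x)"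
  by (metis norm_eq_sqrt_cinner norm_ge_zero real_sqrt_ge_0_iff real_sqrt_pow2)

lemma power2_norm_diff_scaleC:
  "(norm (w - scaleC t v))\<^sup>2 = (norm w)\<^sup>2 - 2 * Re (cnj t * cinner w v) + (cmod t)\<^sup>2 * (norm v)\<^sup>2"
proof -
  have "cinner (w - scaleC t v) (w - scaleC t v)
      = cinner w w - cnj t * cinner w v - cnj (cnj t * cinner w v) + (t * cnj t) * cinner v v"
    by (simp add: cinner_diff_left cinner_diff_right cinner_scaleC_left cinner_scaleC_right
        cinner_commute [of w v] algebra_simps)
  moreover have "t * cnj t = of_real ((cmod t)\<^sup>2)"
    by (rule complex_norm_square [symmetric])
  ultimately show ?thesis
    by (simp add: power2_norm_eq_cinner)
qed

lemma parallelogram_law: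
  fixes a b :: "'a::complex_inner"
  shows "(norm (a + b))\<^sup>2 + (norm (a - b))\<^sup>2 = 2 * (norm a)\<^sup>2 + 2 * (norm b)\<^sup>2"
  using power2_norm_diff_scaleC [of a 1 b] power2_norm_diff_scaleC [of a "-1" b]
  by (simp add: scaleC_one scaleC_minus_one)

lemma cspan_superset: "v \<in> S \<Longrightarrow> v \<in> cspan S"
  unfolding cspan_def by (rule CollectI, intro exI [of _ "{v}"] exI [of _ "\<lambda>_. 1"]) (simp add: scaleC_one)

lemma csubspace_cspan: "csubspace (cspan S)"
  unfolding csubspace_def
proof (intro conjI ballI allI)
  show "0 \<in> cspan S"
    unfolding cspan_def by (intro CollectI exI [of _ "{}"]) simp
next
  fix x y assume "x \<in> cspan S" "y \<in> cspan S"
  then obtain F c G d where F: "finite F" "F \<subseteq> S" "x = (\<Sum>v\<in>F. scaleC (c v) v)"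
    and G: "finite G" "G \<subseteq> S" "y = (\<Sum>v\<in>G. scaleC (d v) v)"
    unfolding cspan_def by blast
  have x: "x = (\<Sum>v\<in>F \<union> G. scaleC (if v \<in> F then c v else 0) v)"
    unfolding F(3) by (rule sum.mono_neutral_cong_left) (use F G in auto)
  have y: "y = (\<Sum>v\<in>F \<union> G. scaleC (if v \<in> G then d v else 0) v)"
    unfolding G(3) by (rule sum.mono_neutral_cong_left) (use F G in auto)
  have "x + y = (\<Sum>v\<in>F \<union> G. scaleC ((if v \<in> F then c v else 0) + (if v \<in> G then d v else 0)) v)"
    unfolding x y by (simp add: sum.distrib scaleC_add_left)
  then show "x + y \<in> cspan S"
    unfolding cspan_def using F G by (intro CollectI exI conjI) auto
next
  fix a x assume "x \<in> cspan S"
  then obtain F c where F: "finite F" "F \<subseteq> S" "x = (\<Sum>v\<in>F. scaleC (c v) v)"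
    unfolding cspan_def by blast
  then have "scaleC a x = (\<Sum>v\<in>F. scaleC (a * c v) v)"
    by (simp add: scaleC_sum_right scaleC_scaleC)
  then show "scaleC a x \<in> cspan S"
    unfolding cspan_def using F by (intro CollectI exI conjI) auto
qed

lemma cspan_range_obtain:
  assumes "y \<in> cspan (range \<phi>)"
  obtains K c where "finite K" "y = (\<Sum>k\<in>K. scaleC (c k) (\<phi> k))"
proof -
  from assms obtain F c where F: "finite F" "F \<subseteq> range \<phi>" and y: "y = (\<Sum>v\<in>F. scaleC (c v) v)"
    unfolding cspan_def by blast
  obtain idx where idx: "\<And>v. v \<in> F \<Longrightarrow> \<phi> (idx v) = v"
    using F(2) by (metis f_inv_into_f subsetD)
  have "inj_on idx F"
    by (metis idx inj_onI)
  then have "(\<Sum>k\<in>idx ` F. scaleC (c (\<phi> k)) (\<phi> k)) = (\<Sum>v\<in>F. scaleC (c v) v)"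
    by (simp add: sum.reindex idx)
  with F(1) y show thesis
    using that [of "idx ` F" "c \<circ> \<phi>"] by simp
qed

lemma orthogonal_if_norm_le_norm_diff_scaleC:
  fixes w v :: "'a::complex_inner"
  assumes le: "\<And>t. norm w \<le> norm (w - scaleC t v)"
  shows "cinner w v = 0"
proof -
  define a N where "a = cinner w v" and "N = (norm v)\<^sup>2"
  \<comment> \<open>moving w by a small multiple of a v would shorten it unless a = 0\<close>
  define s where "s = 1 / (N + 1)"
  have s: "s > 0" "s * N < 1"
    unfolding s_def N_def by (simp_all add: add_pos_nonneg field_simps)
  have re: "cnj (of_real s * a) * a = of_real (s * (cmod a)\<^sup>2)"
    using complex_norm_square [of a] by (simp add: mult_ac)
  have "(norm w)\<^sup>2 \<le> (norm (w - scaleC (of_real s * a) v))\<^sup>2"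
    using le by (simp add: power_mono)
  also have "\<dots> = (norm w)\<^sup>2 - 2 * s * (cmod a)\<^sup>2 + s\<^sup>2 * (cmod a)\<^sup>2 * N"
    unfolding power2_norm_diff_scaleC a_def [symmetric] N_def [symmetric] re
    by (simp add: norm_mult power_mult_distrib abs_of_pos [OF s(1)])
  finally have "0 \<le> (s * (s * N - 2)) * (cmod a)\<^sup>2"
    by (simp add: algebra_simps power2_eq_square)
  then have "a = 0"
    using s by (simp add: zero_le_mult_iff)
  then show ?thesis
    by (simp add: a_def)
qed

lemma convex_power2_norm_diff_le_excess:
  fixes C :: "'a::complex_inner set"
  assumes "convex C" "x \<in> C" "y \<in> C" and d: "\<And>c. c \<in> C \<Longrightarrow> d \<le> (norm (z - c))\<^sup>2"
  shows "(norm (x - y))\<^sup>2 \<le> 2 * ((norm (z - x))\<^sup>2 - d) + 2 * ((norm (z - y))\<^sup>2 - d)"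
proof -
  define c where "c = (1/2) *\<^sub>R x + (1/2) *\<^sub>R y"
  have "c \<in> C"
    unfolding c_def using assms(1-3) by (rule convexD) auto
  have "(z - x) + (z - y) = 2 *\<^sub>R (z - c)"
    unfolding c_def by (simp add: algebra_simps scaleR_2)
  then have "(norm (x - y))\<^sup>2 = 2 * (norm (z - x))\<^sup>2 + 2 * (norm (z - y))\<^sup>2 - 4 * (norm (z - c))\<^sup>2"
    using parallelogram_law [of "z - x" "z - y"]
    by (simp add: norm_minus_commute power_mult_distrib)
  with d [OF \<open>c \<in> C\<close>] show ?thesis
    by simp
qed

lemma Cauchy_if_power2_dist_le:
  fixes X :: "nat \<Rightarrow> 'a::metric_space"
  assumes le: "\<And>m n. (dist (X m) (X n))\<^sup>2 \<le> e m + e n" and e: "e \<longlonglongrightarrow> 0"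
  shows "Cauchy X"
proof (rule metric_CauchyI)
  fix \<epsilon> :: real assume "\<epsilon> > 0"
  then have "\<forall>\<^sub>F n in sequentially. e n < \<epsilon>\<^sup>2 / 2"
    using e by (intro order_tendstoD(2)) auto
  then obtain N where N: "\<And>n. n \<ge> N \<Longrightarrow> e n < \<epsilon>\<^sup>2 / 2"
    by (auto simp: eventually_sequentially)
  have "dist (X m) (X n) < \<epsilon>" if "m \<ge> N" "n \<ge> N" for m n
  proof (rule power2_less_imp_less)
    show "(dist (X m) (X n))\<^sup>2 < \<epsilon>\<^sup>2"
      using le [of m n] N [OF \<open>m \<ge> N\<close>] N [OF \<open>n \<ge> N\<close>] by linarith
  qed (use \<open>\<epsilon> > 0\<close> in simp)
  then show "\<exists>M. \<forall>m\<ge>M. \<forall>n\<ge>M. dist (X m) (X n) < \<epsilon>"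
    by blast
qed

lemma chilbert_closest_point_exists:
  fixes C :: "'a::chilbert set"
  assumes "closed C" "convex C" "C \<noteq> {}"
  obtains p where "p \<in> C" "\<And>q. q \<in> C \<Longrightarrow> norm (z - p) \<le> norm (z - q)"
proof -
  define f where "f x = (norm (z - x))\<^sup>2" for x
  define d where "d = Inf (f ` C)"
  have bdd: "bdd_below (f ` C)"
    unfolding f_def by (intro bdd_belowI [of _ 0]) auto
  have d_le: "d \<le> f c" if "c \<in> C" for c
    unfolding d_def using bdd that by (intro cInf_lower) auto
  have "\<exists>x\<in>C. f x < d + inverse (real (Suc n))" for n
    using cInf_less_iff [OF _ bdd, of "d + inverse (real (Suc n))"] \<open>C \<noteq> {}\<close>
    unfolding d_def by auto
  then obtain X where X: "\<And>n. X n \<in> C" "\<And>n. f (X n) < d + inverse (real (Suc n))"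
    by metis
  have "Cauchy X"
  proof (rule Cauchy_if_power2_dist_le)
    show "(dist (X m) (X n))\<^sup>2 \<le> 2 * inverse (real (Suc m)) + 2 * inverse (real (Suc n))" for m n
      using convex_power2_norm_diff_le_excess [OF \<open>convex C\<close> X(1) X(1) d_le [unfolded f_def], of m n]
        X(2) [of m] X(2) [of n]
      by (simp add: dist_norm f_def)
    show "(\<lambda>n. 2 * inverse (real (Suc n))) \<longlonglongrightarrow> 0"
      using tendsto_mult_right_zero [OF LIMSEQ_inverse_real_of_nat] by simp
  qed
  then obtain p where p: "X \<longlonglongrightarrow> p"
    using Cauchy_convergent convergent_def by blast
  have "f p \<le> d"
  proof (rule LIMSEQ_le [OF _ LIMSEQ_inverse_real_of_nat_add [of d]])
    show "(\<lambda>n. f (X n)) \<longlonglongrightarrow> f p"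
      unfolding f_def by (intro tendsto_intros p)
  qed (use X(2) less_imp_le in blast)
  show thesis
  proof
    show "p \<in> C"
      using \<open>closed C\<close> X(1) p by (rule closed_sequentially)
    show "norm (z - p) \<le> norm (z - q)" if "q \<in> C" for q
      using \<open>f p \<le> d\<close> d_le [OF that] unfolding f_def by (simp add: power2_le_imp_le)
  qed
qed

lemma csubspace_imp_convex: "csubspace M \<Longrightarrow> convex M"
  unfolding csubspace_def convex_def by (simp add: scaleR_scaleC)

lemma closure_csubspace_add:
  assumes "csubspace M" "p \<in> closure M" "m \<in> M"
  shows "p + m \<in> closure M"
proof -
  have "(\<lambda>q. q + m) ` closure M \<subseteq> closure M"
    using assms(1,3) closure_subset
    by (intro image_closure_subset continuous_intros) (auto simp: csubspace_def)
  with assms(2) show ?thesis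
    by blast
qed

lemma closure_csubspace_eq_UNIV:
  fixes M :: "'a::chilbert set"
  assumes "csubspace M" and orth: "\<And>w. (\<And>m. m \<in> M \<Longrightarrow> cinner w m = 0) \<Longrightarrow> w = 0"
  shows "closure M = UNIV"
proof -
  have "z \<in> closure M" for z
  proof -
    have "0 \<in> M" "convex M"
      using assms(1) by (simp_all add: csubspace_def csubspace_imp_convex)
    then obtain p where p: "p \<in> closure M" "\<And>q. q \<in> closure M \<Longrightarrow> norm (z - p) \<le> norm (z - q)"
      using chilbert_closest_point_exists [of "closure M" z] closure_subset by blast
    have "cinner (z - p) m = 0" if "m \<in> M" for m
    proof (rule orthogonal_if_norm_le_norm_diff_scaleC)
      fix t
      have "p + scaleC t m \<in> closure M"
        using assms(1) p(1) that by (intro closure_csubspace_add) (auto simp: csubspace_def)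
      then show "norm (z - p) \<le> norm (z - p - scaleC t m)"
        using p(2) by (simp add: diff_diff_eq)
    qed
    then have "z - p = 0"
      by (rule orth)
    with p(1) show ?thesis
      by simp
  qed
  then show ?thesis
    by blast
qed

lemma eq_0_if_orthogonal_to_dense:
  fixes w :: "'a::complex_inner"
  assumes "closure E = UNIV" and orth: "\<And>y. y \<in> E \<Longrightarrow> cinner w y = 0"
  shows "w = 0"
proof (rule ccontr)
  assume "w \<noteq> 0"
  then have "norm w > 0"
    by simp
  then obtain y where "y \<in> E" and y: "dist y w < norm w"
    using assms(1) closure_approachable [of w E] by blast
  have "(norm (w - y))\<^sup>2 = (norm w)\<^sup>2 + (norm y)\<^sup>2"
    using power2_norm_diff_scaleC [of w 1 y] orth [OF \<open>y \<in> E\<close>] by (simp add: scaleC_one)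
  then have "norm w \<le> norm (w - y)"
    by (simp add: power2_le_imp_le)
  with y show False
    by (simp add: dist_norm norm_minus_commute)
qed

lemma quasi_basis_cspan_range:
  assumes "biorthogonal \<phi> \<psi>"
  shows "quasi_basis \<phi> \<psi> D (cspan (range \<phi>))"
  unfolding quasi_basis_def
proof (intro ballI)
  fix x y assume "y \<in> cspan (range \<phi>)"
  then obtain K c where K: "finite K" and y: "y = (\<Sum>k\<in>K. scaleC (c k) (\<phi> k))"
    by (rule cspan_range_obtain)
  have "cinner (\<psi> j) (\<phi> k) = (if k = j then 1 else 0)" for j k
    using assms cinner_commute [of "\<psi> j" "\<phi> k"] by (simp add: biorthogonal_def)
  then have "cinner (\<psi> j) y = (if j \<in> K then cnj (c j) else 0)" for j
    using K by (simp add: y cinner_sum_right cinner_scaleC_right of_bool_def [symmetric] sum.delta)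
  then have "(\<lambda>k. cinner x (\<phi> k) * cinner (\<psi> k) y)
      = (\<lambda>k. if k \<in> K then cinner x (\<phi> k) * cnj (c k) else 0)"
    by auto
  moreover have "cinner x y = (\<Sum>k\<in>K. cinner x (\<phi> k) * cnj (c k))"
    by (simp add: y cinner_sum_right cinner_scaleC_right mult.commute)
  ultimately show "(\<lambda>k. cinner x (\<phi> k) * cinner (\<psi> k) y) sums cinner x y"
    using sums_If_finite_set [OF K] by simp
qed

theorem proposition4p3:
  fixes \<phi> \<psi> :: "nat \<Rightarrow> 'a::chilbert"
    and D E :: "'a set"
    and r :: "nat \<Rightarrow> real"
  assumes biorth: "biorthogonal \<phi> \<psi>"
    and D_sub: "csubspace D" and E_sub: "csubspace E"
    and D_dense: "dense_in_H D" and E_dense: "dense_in_H E"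
    and qb: "quasi_basis \<phi> \<psi> D E"
    and D1: "cspan (range \<psi>) \<subseteq> D" and D2: "D \<subseteq> Dom \<phi>"
    and E1: "cspan (range \<phi>) \<subseteq> E" and E2: "E \<subseteq> Dom \<psi>"
    and r_ge: "\<And>n. r n \<ge> 1"
    and r_D: "Dom_weighted r \<phi> \<subseteq> D"
    and r_dense: "dense_in_H (Dom_weighted r \<phi>)"
  shows "dense_in_H (cspan (range \<phi>)) \<and> quasi_basis \<phi> \<psi> (Dom \<phi>) (cspan (range \<phi>))"
proof
  have "w = 0" if orth: "\<And>m. m \<in> cspan (range \<phi>) \<Longrightarrow> cinner w m = 0" for w
  proof (rule eq_0_if_orthogonal_to_dense)
    show "closure E = UNIV"
      using E_dense by (simp add: dense_in_H_def)
    have coeff: "cinner w (\<phi> k) = 0" for k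
      by (rule orth [OF cspan_superset [OF rangeI]])
    then have "w \<in> D"
      using r_D by (auto simp: Dom_weighted_def)
    fix y assume "y \<in> E"
    with qb \<open>w \<in> D\<close> have "(\<lambda>k. cinner w (\<phi> k) * cinner (\<psi> k) y) sums cinner w y"
      by (simp add: quasi_basis_def)
    then show "cinner w y = 0"
      using sums_unique2 [OF sums_zero] by (simp add: coeff)
  qed
  then show "dense_in_H (cspan (range \<phi>))"
    unfolding dense_in_H_def using csubspace_cspan by (rule closure_csubspace_eq_UNIV [rotated])
  show "quasi_basis \<phi> \<psi> (Dom \<phi>) (cspan (range \<phi>))"
    using biorth by (rule quasi_basis_cspan_range)
qed

end
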